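(* Let $\phi$ be a Bernstein function with $\phi(0+)=0$ such that for some $\delta_0\in(0,1]$ and $c>0$, $c(R/r)^{\delta_0}\le\phi(R)/\phi(r)$ for all $0<r<R<\infty$. For $t,\lambda>0$ let $$g_t(\lambda)=\int_0^\infty\big(e^{-t\phi(\lambda r^2)}-e^{-t\phi(2\lambda r^2)}\big)e^{-r^2/4}r^{d-1}\,dr.$$ Then there is $N=N(c,\delta_0,d)$ such that $g_t(v^{-1})\le N\,t\,\phi(v^{-1})$ for all $t,v>0$. *)

theory Defs
  imports "HOL-Analysis.Analysis"
begin

definition bernstein :: "(real \<Rightarrow> real) \<Rightarrow> bool" where
  "bernstein \<phi> \<longleftrightarrow>
     (\<forall>x>0. \<phi> x \<ge> 0) \<and>
     (\<forall>n. \<forall>x>0. ((deriv ^^ n) \<phi> has_real_derivative (deriv ^^ Suc n) \<phi> x) (at x)) \<and>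
     (\<forall>n\<ge>1. \<forall>x>0. (-1) ^ (n - 1) * (deriv ^^ n) \<phi> x \<ge> 0)"

definition g_fun :: "nat \<Rightarrow> (real \<Rightarrow> real) \<Rightarrow> real \<Rightarrow> real \<Rightarrow> real" where
  "g_fun d \<phi> t lam =
     set_lebesgue_integral lborel {0<..}
       (\<lambda>r. (exp (- t * \<phi> (lam * r\<^sup>2)) - exp (- t * \<phi> (2 * lam * r\<^sup>2)))
               * exp (- (r\<^sup>2) / 4) * r ^ (d - 1))"

end

theory Submission
  imports Defs "HOL-Probability.Probability"
begin

(* Only nonnegativity and concavity of \<phi> on (0,oo) matter. A nonnegative concave function has
   nonnegative derivative and satisfies x \<phi>'(x) \<le> \<phi>(x), so its tangent at \<lambda> gives
   \<phi>(y) \<le> (1 + y/\<lambda>) \<phi>(\<lambda>). Together with exp(-a) - exp(-b) \<le> b for a \<ge> 0 this bounds the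
   integrand of g_t(\<lambda>) by t \<phi>(\<lambda>) (1 + 2r^2) exp(-r^2/4) r^(d-1), whose integral over (0,oo)
   is a finite Gaussian moment. *)

lemma concave_on_imp_below_tangent:
  fixes f :: "real \<Rightarrow> real"
  assumes "concave_on A f" "connected A" "x \<in> interior A" "y \<in> A"
    and "(f has_real_derivative f') (at x within A)"
  shows "f y \<le> f x + f' * (y - x)"
proof -
  have "convex_on A (\<lambda>x. - f x)"
    using assms(1) by (simp add: concave_on_def)
  moreover have "((\<lambda>x. - f x) has_real_derivative - f') (at x within A)"
    using assms(5) by (rule DERIV_minus)
  ultimately have "- f y - - f x \<ge> - f' * (y - x)"
    using convex_on_imp_above_tangent assms(2-4) by blast
  then show ?thesis by simp
qed

context
  fixes f f' :: "real \<Rightarrow> real"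
  assumes concave: "concave_on {0<..} f"
    and nonneg: "\<And>x. 0 < x \<Longrightarrow> 0 \<le> f x"
    and deriv: "\<And>x. 0 < x \<Longrightarrow> (f has_real_derivative f' x) (at x)"
begin

private lemma le_tangent:
  assumes "0 < x" "0 < y"
  shows "f y \<le> f x + f' x * (y - x)"
  using concave_on_imp_below_tangent[OF concave] assms deriv[OF \<open>0 < x\<close>]
  by (simp add: interior_open has_field_derivative_at_within convex_connected)

lemma nonneg_concave_deriv_nonneg:
  assumes "0 < x"
  shows "0 \<le> f' x"
proof (rule ccontr)
  assume "\<not> 0 \<le> f' x"
  define y where "y = x + (f x + 1) / - f' x"
  have "(f x + 1) / f' x < 0"
    using \<open>\<not> 0 \<le> f' x\<close> nonneg[OF \<open>0 < x\<close>] by (intro divide_pos_neg) auto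
  then have "0 < y"
    using \<open>0 < x\<close> by (simp add: y_def)
  have "f y \<le> -1"
    using le_tangent[OF \<open>0 < x\<close> \<open>0 < y\<close>] \<open>\<not> 0 \<le> f' x\<close> by (simp add: y_def)
  with nonneg[OF \<open>0 < y\<close>] show False by simp
qed

lemma nonneg_concave_mult_deriv_le:
  assumes "0 < x"
  shows "x * f' x \<le> f x"
proof -
  have "((\<lambda>y. f x + f' x * (y - x)) \<longlongrightarrow> f x + f' x * (0 - x)) (at_right 0)"
    by (intro tendsto_intros)
  moreover have "\<forall>\<^sub>F y in at_right 0. 0 \<le> f x + f' x * (y - x)"
    using eventually_at_right_real[OF zero_less_one]
    by eventually_elim (use le_tangent[OF \<open>0 < x\<close>] nonneg in force)
  ultimately have "0 \<le> f x + f' x * (0 - x)"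
    by (rule tendsto_lowerbound) simp
  then show ?thesis by (simp add: algebra_simps)
qed

lemma nonneg_concave_le_linear:
  assumes "0 < l" "0 < y"
  shows "f y \<le> (1 + y / l) * f l"
proof -
  have "f y \<le> f l + f' l * (y - l)"
    using le_tangent assms by blast
  also have "\<dots> \<le> f l + y * f' l"
    using nonneg_concave_deriv_nonneg[OF \<open>0 < l\<close>] \<open>0 < l\<close> by (simp add: algebra_simps)
  also have "y * f' l \<le> y / l * f l"
    using nonneg_concave_mult_deriv_le[OF \<open>0 < l\<close>] assms by (simp add: field_simps)
  finally show ?thesis by (simp add: algebra_simps)
qed

end

lemma bernstein_nonneg: "bernstein \<phi> \<Longrightarrow> 0 < x \<Longrightarrow> 0 \<le> \<phi> x"
  unfolding bernstein_def by blast

lemma bernstein_has_deriv_iter: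
  "bernstein \<phi> \<Longrightarrow> 0 < x \<Longrightarrow> ((deriv ^^ n) \<phi> has_real_derivative (deriv ^^ Suc n) \<phi> x) (at x)"
  unfolding bernstein_def by blast

lemma bernstein_has_deriv: "bernstein \<phi> \<Longrightarrow> 0 < x \<Longrightarrow> (\<phi> has_real_derivative deriv \<phi> x) (at x)"
  using bernstein_has_deriv_iter[of \<phi> x 0] by simp

lemma bernstein_deriv_has_deriv:
  "bernstein \<phi> \<Longrightarrow> 0 < x \<Longrightarrow> (deriv \<phi> has_real_derivative deriv (deriv \<phi>) x) (at x)"
  using bernstein_has_deriv_iter[of \<phi> x 1] by simp

lemma bernstein_deriv_iter_sign:
  "bernstein \<phi> \<Longrightarrow> 1 \<le> n \<Longrightarrow> 0 < x \<Longrightarrow> 0 \<le> (-1) ^ (n - 1) * (deriv ^^ n) \<phi> x"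
  unfolding bernstein_def by blast

lemma bernstein_deriv2_nonpos: "bernstein \<phi> \<Longrightarrow> 0 < x \<Longrightarrow> deriv (deriv \<phi>) x \<le> 0"
  using bernstein_deriv_iter_sign[of \<phi> 2 x] by (simp add: numeral_2_eq_2)

lemma bernstein_concave: "bernstein \<phi> \<Longrightarrow> concave_on {0<..} \<phi>"
  by (rule f''_le0_imp_concave[where f' = "deriv \<phi>" and f'' = "deriv (deriv \<phi>)"])
    (use bernstein_has_deriv bernstein_deriv_has_deriv bernstein_deriv2_nonpos in auto)

lemma bernstein_le_linear:
  assumes "bernstein \<phi>" "0 < l" "0 < y"
  shows "\<phi> y \<le> (1 + y / l) * \<phi> l"
  using nonneg_concave_le_linear[OF bernstein_concave[OF assms(1)] bernstein_nonneg[OF assms(1)]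
      bernstein_has_deriv[OF assms(1)] assms(2,3)] .

lemma exp_neg_diff_le:
  fixes a b :: real
  assumes "0 \<le> a"
  shows "exp (- a) - exp (- b) \<le> b"
proof -
  have "exp (- a) \<le> 1" using assms by simp
  moreover have "1 - b \<le> exp (- b)" using exp_ge_add_one_self[of "- b"] by simp
  ultimately show ?thesis by linarith
qed

lemma set_integrable_gaussian_moment:
  "set_integrable lborel {0<..} (\<lambda>x::real. exp (- (x\<^sup>2) / 4) * x ^ k)"
proof -
  have "integrable lborel (\<lambda>x. sqrt (2 * pi * (sqrt 2)\<^sup>2) * (normal_density 0 (sqrt 2) x * \<bar>x - 0\<bar> ^ k))"
    by (intro integrable_mult_right integrable_normal_moment_abs) simp
  also have "(\<lambda>x. sqrt (2 * pi * (sqrt 2)\<^sup>2) * (normal_density 0 (sqrt 2) x * \<bar>x - 0\<bar> ^ k))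
      = (\<lambda>x. exp (- (x\<^sup>2) / 4) * \<bar>x\<bar> ^ k)"
    by (rule ext) (simp add: normal_density_def)
  finally have "set_integrable lborel {0<..} (\<lambda>x::real. exp (- (x\<^sup>2) / 4) * \<bar>x\<bar> ^ k)"
    unfolding set_integrable_def by (intro integrable_mult_indicator) auto
  then show ?thesis
    by (rule set_integrable_cong[THEN iffD1, rotated -1]) auto
qed

(* No integrability of f is assumed: a non-integrable function has integral 0. *)
lemma set_integral_le_nonneg_majorant:
  fixes f g :: "_ \<Rightarrow> real"
  assumes "set_integrable M A g" "\<And>x. x \<in> A \<Longrightarrow> f x \<le> g x" "\<And>x. x \<in> A \<Longrightarrow> 0 \<le> g x"
  shows "(LINT x:A|M. f x) \<le> (LINT x:A|M. g x)"
proof (cases "set_integrable M A f")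
  case True
  then show ?thesis using assms(1,2) by (rule set_integral_mono)
next
  case False
  then have "(LINT x:A|M. f x) = 0"
    unfolding set_integrable_def set_lebesgue_integral_def by (rule not_integrable_integral_eq)
  moreover have "0 \<le> (LINT x:A|M. g x)"
    unfolding set_lebesgue_integral_def using assms(3) by (simp add: indicator_def)
  ultimately show ?thesis by simp
qed

lemma g_fun_integrand_le:
  assumes "bernstein \<phi>" "0 \<le> t" "0 < l" "0 < r"
  shows "(exp (- t * \<phi> (l * r\<^sup>2)) - exp (- t * \<phi> (2 * l * r\<^sup>2))) * exp (- (r\<^sup>2) / 4) * r ^ (d - 1)
    \<le> t * \<phi> l * (exp (- (r\<^sup>2) / 4) * (1 + 2 * r\<^sup>2) * r ^ (d - 1))"
proof -
  have "0 < l * r\<^sup>2" "0 < 2 * l * r\<^sup>2"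
    using assms(3,4) by simp_all
  have "exp (- t * \<phi> (l * r\<^sup>2)) - exp (- t * \<phi> (2 * l * r\<^sup>2)) \<le> t * \<phi> (2 * l * r\<^sup>2)"
    using exp_neg_diff_le[of "t * \<phi> (l * r\<^sup>2)" "t * \<phi> (2 * l * r\<^sup>2)"]
      bernstein_nonneg[OF assms(1) \<open>0 < l * r\<^sup>2\<close>] assms(2) by simp
  also have "\<dots> \<le> t * ((1 + 2 * r\<^sup>2) * \<phi> l)"
    using bernstein_le_linear[OF assms(1,3) \<open>0 < 2 * l * r\<^sup>2\<close>] assms(2,3)
    by (intro mult_left_mono) simp_all
  finally have "exp (- t * \<phi> (l * r\<^sup>2)) - exp (- t * \<phi> (2 * l * r\<^sup>2)) \<le> t * \<phi> l * (1 + 2 * r\<^sup>2)"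
    by (simp add: ac_simps)
  then have "(exp (- t * \<phi> (l * r\<^sup>2)) - exp (- t * \<phi> (2 * l * r\<^sup>2))) * (exp (- (r\<^sup>2) / 4) * r ^ (d - 1))
      \<le> t * \<phi> l * (1 + 2 * r\<^sup>2) * (exp (- (r\<^sup>2) / 4) * r ^ (d - 1))"
    using assms(4) by (intro mult_right_mono) simp_all
  then show ?thesis by (simp only: ac_simps)
qed

lemma g_fun_le:
  assumes "bernstein \<phi>" "0 \<le> t" "0 < l"
  shows "g_fun d \<phi> t l \<le> t * \<phi> l * (LINT r:{0<..}|lborel. exp (- (r\<^sup>2) / 4) * (1 + 2 * r\<^sup>2) * r ^ (d - 1))"
proof -
  let ?w = "\<lambda>r::real. exp (- (r\<^sup>2) / 4) * (1 + 2 * r\<^sup>2) * r ^ (d - 1)"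
  have "?w = (\<lambda>r. exp (- (r\<^sup>2) / 4) * r ^ (d - 1) + 2 * (exp (- (r\<^sup>2) / 4) * r ^ (d - 1 + 2)))"
    by (simp add: fun_eq_iff power_add power2_eq_square algebra_simps)
  then have "set_integrable lborel {0<..} ?w"
    by (simp only:) (intro set_integral_add(1) set_integrable_mult_right set_integrable_gaussian_moment)
  then have "set_integrable lborel {0<..} (\<lambda>r. t * \<phi> l * ?w r)"
    by (rule set_integrable_mult_right)
  moreover have "0 \<le> t * \<phi> l * ?w r" if "r \<in> {0<..}" for r
    using that assms(2) bernstein_nonneg[OF assms(1,3)] by simp
  ultimately have "g_fun d \<phi> t l \<le> (LINT r:{0<..}|lborel. t * \<phi> l * ?w r)"
    unfolding g_fun_def using g_fun_integrand_le[OF assms] by (intro set_integral_le_nonneg_majorant) auto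
  then show ?thesis by simp
qed

theorem lemma3p2:
  fixes c \<delta>0 :: real and d :: nat
  assumes "0 < \<delta>0" "\<delta>0 \<le> 1" "c > 0" "d \<ge> 1"
  shows "\<exists>N. \<forall>\<phi>. bernstein \<phi> \<and> (\<phi> \<longlongrightarrow> 0) (at_right 0) \<and>
            (\<forall>r R. 0 < r \<and> r < R \<longrightarrow> c * (R / r) powr \<delta>0 \<le> \<phi> R / \<phi> r) \<longrightarrow>
            (\<forall>t>0. \<forall>v>0. g_fun d \<phi> t (1 / v) \<le> N * t * \<phi> (1 / v))"
proof (intro exI allI impI)
  fix \<phi> :: "real \<Rightarrow> real" and t v :: real
  assume "bernstein \<phi> \<and> (\<phi> \<longlongrightarrow> 0) (at_right 0) \<and>
    (\<forall>r R. 0 < r \<and> r < R \<longrightarrow> c * (R / r) powr \<delta>0 \<le> \<phi> R / \<phi> r)" "0 < t" "0 < v"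
  then show "g_fun d \<phi> t (1 / v)
      \<le> (LINT r:{0<..}|lborel. exp (- (r\<^sup>2) / 4) * (1 + 2 * r\<^sup>2) * r ^ (d - 1)) * t * \<phi> (1 / v)"
    using g_fun_le[of \<phi> t "1 / v" d] by (simp add: ac_simps)
qed

end
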